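(* Let $(M,d)$ be a complete metric space and $X\subseteq M$ compact. Assume that every $\mu\in P(X)$ admits a barycenter in $M$, that $Y=conv(X)$ is compact, and that at least one variance maximizing $\mu\in P(X)$ has a unique barycenter. Then the circumcenter of $X$ in $M$, which lies in $Y$, is unique.
   Context: $P(\cdot)$ denotes Borel probability measures. $Var(\mu)=\inf_{y\in M}\int_X d^2(x,y)\,d\mu(x)$, a barycenter of $\mu$ is a point of $M$ attaining this infimum, and a variance maximizing measure is a maximizer of $Var$ over $P(X)$. $conv(X)$ is the set of all barycenters of measures in $P(X)$. The circumradius of $X$ is $R=\inf_{y\in M}\sup_{x\in X}d(x,y)$, and a circumcenter of $X$ is a point $y\in M$ with $X\subseteq\bar B(y,R)$, where $\bar B(y,R)$ is the closed ball of radius $R$ about $y$. *)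

theory Defs
  imports "HOL-Probability.Probability"
begin

text \<open>The complete metric space (M,d) is the whole type 'a (class metric_space + complete_space).
  P(X): Borel probability measures on M concentrated on X.\<close>

definition probs :: "'a::metric_space set \<Rightarrow> 'a measure set" where
  "probs X = {\<mu>. prob_space \<mu> \<and> sets \<mu> = sets borel \<and> emeasure \<mu> X = 1}"

definition var_at :: "'a::metric_space measure \<Rightarrow> 'a \<Rightarrow> real" where
  "var_at \<mu> y = (\<integral>x. (dist x y)\<^sup>2 \<partial>\<mu>)"

definition Var :: "'a::metric_space measure \<Rightarrow> real" where
  "Var \<mu> = (INF y. var_at \<mu> y)"

definition barycenter :: "'a::metric_space measure \<Rightarrow> 'a \<Rightarrow> bool" where
  "barycenter \<mu> y \<longleftrightarrow> var_at \<mu> y = Var \<mu>"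

definition var_max :: "'a::metric_space set \<Rightarrow> 'a measure \<Rightarrow> bool" where
  "var_max X \<mu> \<longleftrightarrow> \<mu> \<in> probs X \<and> (\<forall>\<nu>\<in>probs X. Var \<nu> \<le> Var \<mu>)"

definition conv_bary :: "'a::metric_space set \<Rightarrow> 'a set" where
  "conv_bary X = {y. \<exists>\<mu>\<in>probs X. barycenter \<mu> y}"

definition circumradius :: "'a::metric_space set \<Rightarrow> real" where
  "circumradius X = (INF y. SUP x\<in>X. dist x y)"

definition circumcenter :: "'a::metric_space set \<Rightarrow> 'a \<Rightarrow> bool" where
  "circumcenter X y \<longleftrightarrow> X \<subseteq> cball y (circumradius X)"

end

theory Submission
  imports Defs
begin

(* Let \<mu> be variance maximizing with unique barycenter b, and V = Var \<mu>.  For x \<in> X the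
   mixtures t \<delta>_x + (1 - t) \<mu> have variance at most V; at a barycenter y_t of such a mixture
   this reads t d(x,y_t)^2 + (1 - t) var_\<mu>(y_t) \<le> V \<le> var_\<mu>(y_t), so that both d(x,y_t)^2 and
   var_\<mu>(y_t) are at most V / (1 - t).  A limit point of the y_t as t \<rightarrow> 0 in the compact set
   conv(X) is then a barycenter of \<mu>, i.e. b, and X \<subseteq> cball b (sqrt V).  Conversely
   sup_x d(x,y) \<ge> sqrt (var_\<mu>(y)) \<ge> sqrt V for every y, so the circumradius is sqrt V, b is a
   circumcenter, and every circumcenter c satisfies var_\<mu>(c) \<le> V, whence c = b. *)

lemma AE_mem_probs:
  assumes "\<nu> \<in> probs X"
  shows "AE x in \<nu>. x \<in> X"
proof -
  have p: "prob_space \<nu>" and e: "emeasure \<nu> X = 1"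
    using assms by (auto simp: probs_def)
  then have "X \<in> sets \<nu>" using emeasure_notin_sets by fastforce
  moreover have "measure \<nu> X = 1" using e by (simp add: measure_def)
  ultimately show ?thesis using prob_space.AE_prob_1[OF p] by blast
qed

lemma nonempty_if_in_probs:
  assumes "\<nu> \<in> probs X"
  shows "X \<noteq> {}"
  using assms by (auto simp: probs_def)

lemma integrable_dist_sq_probs:
  assumes "\<nu> \<in> probs X" "bounded X"
  shows "integrable \<nu> (\<lambda>x. (dist x y)\<^sup>2)"
proof -
  have p: "prob_space \<nu>" and s: "sets \<nu> = sets borel"
    using assms(1) by (auto simp: probs_def)
  obtain D where D: "\<forall>x\<in>X. dist x y \<le> D"
    using assms(2) bounded_any_center by (metis dist_commute)
  have "AE x in \<nu>. norm ((dist x y)\<^sup>2) \<le> D\<^sup>2"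
    using AE_mem_probs[OF assms(1)] D by (auto intro!: power_mono)
  moreover have "(\<lambda>x. (dist x y)\<^sup>2) \<in> borel_measurable \<nu>"
    unfolding measurable_cong_sets[OF s refl] by (intro borel_measurable_continuous_onI continuous_intros)
  ultimately show ?thesis
    by (rule finite_measure.integrable_const_bound[OF prob_space.finite_measure[OF p]])
qed

lemma var_at_nonneg: "0 \<le> var_at \<nu> y"
  unfolding var_at_def by (intro integral_nonneg_AE) auto

lemma Var_le_var_at: "Var \<nu> \<le> var_at \<nu> y"
  unfolding Var_def by (rule cINF_lower) (auto intro: bdd_belowI[where m=0] var_at_nonneg)

lemma Var_nonneg: "0 \<le> Var \<nu>"
  unfolding Var_def by (rule cINF_greatest) (auto intro: var_at_nonneg)

lemma barycenterI: "var_at \<nu> y \<le> Var \<nu> \<Longrightarrow> barycenter \<nu> y"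
  using Var_le_var_at[of \<nu> y] by (simp add: barycenter_def)

lemma var_at_le_bound:
  assumes "\<nu> \<in> probs X" "bounded X" "\<And>x. x \<in> X \<Longrightarrow> (dist x y)\<^sup>2 \<le> B"
  shows "var_at \<nu> y \<le> B"
proof -
  have p: "prob_space \<nu>" using assms(1) by (auto simp: probs_def)
  have "var_at \<nu> y \<le> (\<integral>x. B \<partial>\<nu>)"
    unfolding var_at_def using AE_mem_probs[OF assms(1)] assms(3)
    by (intro integral_mono_AE integrable_dist_sq_probs[OF assms(1,2)])
       (auto simp: finite_measure.integrable_const p prob_space.finite_measure)
  also have "\<dots> = B" using p by (simp add: prob_space.prob_space)
  finally show ?thesis .
qed

lemma abs_var_at_diff_le:
  assumes "\<nu> \<in> probs X" "bounded X" "\<And>x. x \<in> X \<Longrightarrow> dist x z \<le> D"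
  shows "\<bar>var_at \<nu> y - var_at \<nu> z\<bar> \<le> dist y z * (2 * D + dist y z)"
proof -
  have p: "prob_space \<nu>" using assms(1) by (auto simp: probs_def)
  have pointwise: "\<bar>(dist x y)\<^sup>2 - (dist x z)\<^sup>2\<bar> \<le> dist y z * (2 * D + dist y z)" if "x \<in> X" for x
  proof -
    have "(dist x y)\<^sup>2 - (dist x z)\<^sup>2 = (dist x y - dist x z) * (dist x y + dist x z)"
      by (simp add: power2_eq_square algebra_simps)
    then have "\<bar>(dist x y)\<^sup>2 - (dist x z)\<^sup>2\<bar> = \<bar>dist x y - dist x z\<bar> * (dist x y + dist x z)"
      by (simp add: abs_mult)
    also have "\<dots> \<le> dist y z * (2 * D + dist y z)"
      using assms(3)[OF that] dist_triangle[of x y z] dist_triangle[of x z y]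
      by (intro mult_mono) (auto simp: dist_commute)
    finally show ?thesis .
  qed
  have "\<bar>var_at \<nu> y - var_at \<nu> z\<bar> = \<bar>\<integral>x. (dist x y)\<^sup>2 - (dist x z)\<^sup>2 \<partial>\<nu>\<bar>"
    unfolding var_at_def using integrable_dist_sq_probs[OF assms(1,2)] by simp
  also have "\<dots> \<le> (\<integral>x. \<bar>(dist x y)\<^sup>2 - (dist x z)\<^sup>2\<bar> \<partial>\<nu>)"
    using integral_norm_bound[of \<nu> "\<lambda>x. (dist x y)\<^sup>2 - (dist x z)\<^sup>2"] by simp
  also have "\<dots> \<le> (\<integral>x. dist y z * (2 * D + dist y z) \<partial>\<nu>)"
    using AE_mem_probs[OF assms(1)] pointwise integrable_dist_sq_probs[OF assms(1,2)]
    by (intro integral_mono_AE)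
       (auto simp: finite_measure.integrable_const p prob_space.finite_measure elim!: eventually_mono)
  also have "\<dots> = dist y z * (2 * D + dist y z)" using p by (simp add: prob_space.prob_space)
  finally show ?thesis .
qed

lemma continuous_on_var_at:
  assumes "\<nu> \<in> probs X" "bounded X"
  shows "continuous_on A (var_at \<nu>)"
proof (intro continuous_at_imp_continuous_on ballI)
  fix z
  obtain D where D: "\<And>x. x \<in> X \<Longrightarrow> dist x z \<le> D"
    using assms(2) bounded_any_center by (metis dist_commute)
  have "((\<lambda>y. dist y z * (2 * D + dist y z)) \<longlongrightarrow> dist z z * (2 * D + dist z z)) (at z)"
    by (intro tendsto_intros)
  then have "((\<lambda>y. dist y z * (2 * D + dist y z)) \<longlongrightarrow> 0) (at z)" by simp
  then have "((\<lambda>y. var_at \<nu> y - var_at \<nu> z) \<longlongrightarrow> 0) (at z)"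
    by (rule Lim_null_comparison[rotated])
       (auto intro!: always_eventually abs_var_at_diff_le[OF assms D])
  then show "isCont (var_at \<nu>) z"
    unfolding isCont_def by (rule LIM_zero_cancel)
qed

(* t \<delta>_x + (1 - t) \<mu>, as a Bernoulli mixture in the Giry monad *)
definition dirac_mix :: "'a::metric_space measure \<Rightarrow> 'a \<Rightarrow> real \<Rightarrow> 'a measure" where
  "dirac_mix \<mu> x t = measure_pmf (bernoulli_pmf t) \<bind> (\<lambda>b. if b then return borel x else \<mu>)"

lemma
  assumes "prob_space \<mu>" "sets \<mu> = sets borel"
  shows sets_dirac_mix: "sets (dirac_mix \<mu> x t) = sets borel"
    and nn_integral_dirac_mix: "f \<in> borel_measurable borel \<Longrightarrow> 0 \<le> t \<Longrightarrow> t \<le> 1 \<Longrightarrow>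
      (\<integral>\<^sup>+z. f z \<partial>dirac_mix \<mu> x t) = ennreal t * f x + ennreal (1 - t) * (\<integral>\<^sup>+z. f z \<partial>\<mu>)"
proof -
  define K where "K = (\<lambda>b. if b then return borel x else \<mu>)"
  have K: "K \<in> measurable (measure_pmf (bernoulli_pmf t)) (subprob_algebra borel)"
    using assms by (simp add: K_def space_subprob_algebra subprob_space_return prob_space_imp_subprob_space)
  have ne: "space (measure_pmf (bernoulli_pmf t)) \<noteq> {}" by simp
  show "sets (dirac_mix \<mu> x t) = sets borel"
    unfolding dirac_mix_def K_def[symmetric] by (rule sets_bind[OF _ ne]) (simp add: K_def assms)
  assume f: "f \<in> borel_measurable borel" and "0 \<le> t" "t \<le> 1"
  have "(\<integral>\<^sup>+z. f z \<partial>dirac_mix \<mu> x t) = (\<integral>\<^sup>+b. (\<integral>\<^sup>+z. f z \<partial>K b) \<partial>measure_pmf (bernoulli_pmf t))"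
    unfolding dirac_mix_def K_def[symmetric] by (rule nn_integral_bind[OF f K])
  also have "\<dots> = (\<integral>\<^sup>+z. f z \<partial>K True) * ennreal t + (\<integral>\<^sup>+z. f z \<partial>K False) * ennreal (1 - t)"
    using \<open>0 \<le> t\<close> \<open>t \<le> 1\<close> by (simp only: nn_integral_bernoulli_pmf zero_le)
  also have "\<dots> = ennreal t * f x + ennreal (1 - t) * (\<integral>\<^sup>+z. f z \<partial>\<mu>)"
    using f by (simp add: K_def nn_integral_return mult.commute)
  finally show "(\<integral>\<^sup>+z. f z \<partial>dirac_mix \<mu> x t) = ennreal t * f x + ennreal (1 - t) * (\<integral>\<^sup>+z. f z \<partial>\<mu>)" .
qed

lemma dirac_mix_in_probs:
  assumes "\<mu> \<in> probs X" "X \<in> sets borel" "x \<in> X" "0 \<le> t" "t \<le> 1"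
  shows "dirac_mix \<mu> x t \<in> probs X"
proof -
  have p: "prob_space \<mu>" and s: "sets \<mu> = sets borel" and e: "emeasure \<mu> X = 1"
    using assms(1) by (auto simp: probs_def)
  have sm: "sets (dirac_mix \<mu> x t) = sets borel" by (rule sets_dirac_mix[OF p s])
  have em: "emeasure (dirac_mix \<mu> x t) A = ennreal t * indicator A x + ennreal (1 - t) * emeasure \<mu> A"
    if A: "A \<in> sets borel" for A
  proof -
    have "emeasure (dirac_mix \<mu> x t) A = (\<integral>\<^sup>+z. indicator A z \<partial>dirac_mix \<mu> x t)"
      using A sm by simp
    also have "\<dots> = ennreal t * indicator A x + ennreal (1 - t) * emeasure \<mu> A"
      using A assms(4,5) s by (simp add: nn_integral_dirac_mix[OF p s] borel_measurable_indicator)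
    finally show ?thesis .
  qed
  have one: "ennreal t + ennreal (1 - t) = 1" using assms(4,5) by (simp flip: ennreal_plus)
  have "emeasure \<mu> UNIV = 1"
    using prob_space.emeasure_space_1[OF p] sets_eq_imp_space_eq[OF s] by simp
  then have "emeasure (dirac_mix \<mu> x t) UNIV = 1" using em[of UNIV] one by simp
  then have "prob_space (dirac_mix \<mu> x t)"
    using sets_eq_imp_space_eq[OF sm] by (intro prob_spaceI) simp
  moreover have "emeasure (dirac_mix \<mu> x t) X = 1" using em[OF assms(2)] e assms(3) one by simp
  ultimately show ?thesis using sm by (simp add: probs_def)
qed

lemma var_at_dirac_mix:
  assumes "\<mu> \<in> probs X" "bounded X" "0 \<le> t" "t \<le> 1"
  shows "var_at (dirac_mix \<mu> x t) y = t * (dist x y)\<^sup>2 + (1 - t) * var_at \<mu> y"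
proof -
  have p: "prob_space \<mu>" and s: "sets \<mu> = sets borel" using assms(1) by (auto simp: probs_def)
  have meas: "(\<lambda>z. (dist z y)\<^sup>2) \<in> borel_measurable borel"
    by (intro borel_measurable_continuous_onI continuous_intros)
  have "(\<integral>\<^sup>+z. ennreal ((dist z y)\<^sup>2) \<partial>\<mu>) = ennreal (var_at \<mu> y)"
    unfolding var_at_def using integrable_dist_sq_probs[OF assms(1,2)]
    by (simp add: nn_integral_eq_integral)
  then have "(\<integral>\<^sup>+z. ennreal ((dist z y)\<^sup>2) \<partial>dirac_mix \<mu> x t)
      = ennreal t * ennreal ((dist x y)\<^sup>2) + ennreal (1 - t) * ennreal (var_at \<mu> y)"
    using assms(3,4) meas by (simp add: nn_integral_dirac_mix[OF p s])
  also have "\<dots> = ennreal (t * (dist x y)\<^sup>2 + (1 - t) * var_at \<mu> y)"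
    using assms(3,4) var_at_nonneg[of \<mu> y] by (simp add: ennreal_mult ennreal_plus)
  finally have nn: "(\<integral>\<^sup>+z. ennreal ((dist z y)\<^sup>2) \<partial>dirac_mix \<mu> x t)
      = ennreal (t * (dist x y)\<^sup>2 + (1 - t) * var_at \<mu> y)" .
  have var_eq: "var_at (dirac_mix \<mu> x t) y = enn2real (\<integral>\<^sup>+z. ennreal ((dist z y)\<^sup>2) \<partial>dirac_mix \<mu> x t)"
    unfolding var_at_def
    by (rule integral_eq_nn_integral) (auto simp: measurable_cong_sets[OF sets_dirac_mix[OF p s] refl] meas)
  have "0 \<le> t * (dist x y)\<^sup>2 + (1 - t) * var_at \<mu> y"
    using assms(3,4) var_at_nonneg[of \<mu> y] by simp
  then show ?thesis unfolding var_eq nn by (rule enn2real_ennreal)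
qed

lemma barycenter_if_subset_cball:
  assumes "\<nu> \<in> probs X" "bounded X" "X \<subseteq> cball c (sqrt (Var \<nu>))"
  shows "barycenter \<nu> c"
proof (rule barycenterI)
  have "(dist x c)\<^sup>2 \<le> Var \<nu>" if "x \<in> X" for x
  proof -
    have "dist x c \<le> sqrt (Var \<nu>)" using assms(3) that by (auto simp: dist_commute)
    then have "(dist x c)\<^sup>2 \<le> (sqrt (Var \<nu>))\<^sup>2" by (rule power_mono) simp
    then show ?thesis using Var_nonneg[of \<nu>] by simp
  qed
  then show "var_at \<nu> c \<le> Var \<nu>" by (rule var_at_le_bound[OF assms(1,2)])
qed

lemma compact_scaled_le_limit:
  fixes h :: "'a::metric_space \<Rightarrow> real"
  assumes "compact K" "continuous_on K h" "\<And>n. y n \<in> K" "c \<longlonglongrightarrow> 1"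
    and "\<And>n. c n * h (y n) \<le> B"
  obtains l where "l \<in> K" "h l \<le> B"
proof -
  obtain l r where l: "l \<in> K" and r: "strict_mono r" and lim: "(y \<circ> r) \<longlonglongrightarrow> l"
    using assms(1,3) unfolding compact_eq_seq_compact_metric seq_compact_def by metis
  have "(\<lambda>n. h ((y \<circ> r) n)) \<longlonglongrightarrow> h l"
    using assms(3) by (intro continuous_on_tendsto_compose[OF assms(2) lim l]) auto
  moreover have "(c \<circ> r) \<longlonglongrightarrow> 1" using LIMSEQ_subseq_LIMSEQ[OF assms(4) r] .
  ultimately have "(\<lambda>n. c (r n) * h (y (r n))) \<longlonglongrightarrow> 1 * h l"
    by (intro tendsto_mult) (simp_all add: o_def)
  then have "(\<lambda>n. c (r n) * h (y (r n))) \<longlonglongrightarrow> h l" by simp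
  then have "h l \<le> B" by (rule LIMSEQ_le_const2) (blast intro: assms(5))
  with l show ?thesis by (rule that)
qed

lemma barycenter_dirac_mix_le_Var:
  assumes "var_max X \<mu>" "compact X" "x \<in> X" "0 < t" "t \<le> 1"
    and "barycenter (dirac_mix \<mu> x t) y"
  shows "(1 - t) * max ((dist x y)\<^sup>2) (var_at \<mu> y) \<le> Var \<mu>"
proof -
  have \<mu>: "\<mu> \<in> probs X" using assms(1) by (simp add: var_max_def)
  have mix: "dirac_mix \<mu> x t \<in> probs X"
    using dirac_mix_in_probs[OF \<mu> borel_compact[OF assms(2)] assms(3)] assms(4,5) by simp
  have "t * (dist x y)\<^sup>2 + (1 - t) * var_at \<mu> y = var_at (dirac_mix \<mu> x t) y"
    using var_at_dirac_mix[OF \<mu> compact_imp_bounded[OF assms(2)]] assms(4,5) by simp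
  also have "\<dots> = Var (dirac_mix \<mu> x t)" using assms(6) by (simp add: barycenter_def)
  also have "\<dots> \<le> Var \<mu>" using assms(1) mix by (simp add: var_max_def)
  finally have mix_le: "t * (dist x y)\<^sup>2 + (1 - t) * var_at \<mu> y \<le> Var \<mu>" .
  moreover have "Var \<mu> \<le> var_at \<mu> y" by (rule Var_le_var_at)
  ultimately have "t * (dist x y)\<^sup>2 \<le> t * var_at \<mu> y" by (simp add: algebra_simps)
  with assms(4) have "max ((dist x y)\<^sup>2) (var_at \<mu> y) = var_at \<mu> y" by simp
  with mix_le assms(4) show ?thesis by (smt (verit) mult_nonneg_nonneg zero_le_power2)
qed

lemma dist_unique_barycenter_le_Var:
  assumes "compact X" "\<forall>\<nu>\<in>probs X. \<exists>y. barycenter \<nu> y" "compact (conv_bary X)"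
    and "var_max X \<mu>" "\<And>y. barycenter \<mu> y \<Longrightarrow> y = b" "x \<in> X"
  shows "(dist x b)\<^sup>2 \<le> Var \<mu>"
proof -
  define t where "t n = inverse (real (Suc n))" for n
  have t: "0 < t n" "t n \<le> 1" for n by (simp_all add: t_def inverse_le_1_iff)
  have \<mu>: "\<mu> \<in> probs X" using assms(4) by (simp add: var_max_def)
  have mix: "dirac_mix \<mu> x (t n) \<in> probs X" for n
    using dirac_mix_in_probs[OF \<mu> borel_compact[OF assms(1)] assms(6)] t[of n] by simp
  then have "\<forall>n. \<exists>z. barycenter (dirac_mix \<mu> x (t n)) z" using assms(2) by blast
  then obtain y where y: "\<And>n. barycenter (dirac_mix \<mu> x (t n)) (y n)" by metis
  have conv: "y n \<in> conv_bary X" for n using y mix by (auto simp: conv_bary_def)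
  have lim: "(\<lambda>n. 1 - t n) \<longlonglongrightarrow> 1"
    using tendsto_diff[OF tendsto_const LIMSEQ_inverse_real_of_nat] by (simp add: t_def)
  have cont: "continuous_on (conv_bary X) (\<lambda>z. max ((dist x z)\<^sup>2) (var_at \<mu> z))"
    using continuous_on_var_at[OF \<mu> compact_imp_bounded[OF assms(1)]]
    by (intro continuous_intros)
  \<comment> \<open>the max lets a single limit point control both terms\<close>
  obtain l where "max ((dist x l)\<^sup>2) (var_at \<mu> l) \<le> Var \<mu>"
    using compact_scaled_le_limit[OF assms(3) cont conv lim
        barycenter_dirac_mix_le_Var[OF assms(4,1,6) t y]]
    by blast
  moreover from this have "l = b" by (intro assms(5) barycenterI) simp
  ultimately show ?thesis by simp
qed

lemma circumradius_eqI:
  assumes "X \<noteq> {}" "\<And>x. x \<in> X \<Longrightarrow> dist x b \<le> r" "\<And>y. r \<le> (SUP x\<in>X. dist x y)"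
  shows "circumradius X = r"
  unfolding circumradius_def
proof (rule antisym)
  have "(INF y. SUP x\<in>X. dist x y) \<le> (SUP x\<in>X. dist x b)"
    by (rule cINF_lower) (auto intro: bdd_belowI assms(3))
  also have "\<dots> \<le> r" using assms(1,2) by (rule cSUP_least)
  finally show "(INF y. SUP x\<in>X. dist x y) \<le> r" .
  show "r \<le> (INF y. SUP x\<in>X. dist x y)" by (rule cINF_greatest) (simp_all add: assms(3))
qed

lemma sqrt_Var_le_SUP_dist:
  assumes "\<nu> \<in> probs X" "bounded X"
  shows "sqrt (Var \<nu>) \<le> (SUP x\<in>X. dist x y)"
proof -
  obtain D where "\<And>x. x \<in> X \<Longrightarrow> dist x y \<le> D"
    using assms(2) bounded_any_center by (metis dist_commute)
  then have "bdd_above ((\<lambda>x. dist x y) ` X)" by (rule bdd_aboveI2)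
  then have le_SUP: "dist x y \<le> (SUP x\<in>X. dist x y)" if "x \<in> X" for x
    using that by (intro cSUP_upper)
  obtain x0 where "x0 \<in> X" using nonempty_if_in_probs[OF assms(1)] by blast
  then have "0 \<le> (SUP x\<in>X. dist x y)" using le_SUP zero_le_dist order_trans by blast
  moreover have "Var \<nu> \<le> (SUP x\<in>X. dist x y)\<^sup>2"
    using Var_le_var_at[of \<nu> y] var_at_le_bound[OF assms, of y] le_SUP power_mono zero_le_dist
    by (smt (verit))
  ultimately show ?thesis by (rule real_le_lsqrt)
qed

theorem corollary3p3:
  fixes X :: "'a::{metric_space,complete_space} set"
  assumes "compact X"
    and "\<forall>\<mu>\<in>probs X. \<exists>y. barycenter \<mu> y"
    and "compact (conv_bary X)"
    and "\<exists>\<mu>. var_max X \<mu> \<and> (\<exists>!y. barycenter \<mu> y)"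
  shows "(\<exists>!y. circumcenter X y) \<and> (\<forall>y. circumcenter X y \<longrightarrow> y \<in> conv_bary X)"
proof -
  obtain \<mu> b where vm: "var_max X \<mu>" and b: "barycenter \<mu> b"
    and uniq: "\<And>y. barycenter \<mu> y \<Longrightarrow> y = b"
    using assms(4) by blast
  have \<mu>: "\<mu> \<in> probs X" using vm by (simp add: var_max_def)
  have bounded: "bounded X" using assms(1) by (rule compact_imp_bounded)
  have dist_b: "dist x b \<le> sqrt (Var \<mu>)" if "x \<in> X" for x
    using dist_unique_barycenter_le_Var[OF assms(1-3) vm uniq that] by (rule real_le_rsqrt)
  have R: "circumradius X = sqrt (Var \<mu>)"
    using nonempty_if_in_probs[OF \<mu>] dist_b sqrt_Var_le_SUP_dist[OF \<mu> bounded]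
    by (rule circumradius_eqI)
  have "circumcenter X b" using dist_b by (auto simp: circumcenter_def R dist_commute)
  moreover have "c = b" if "circumcenter X c" for c
    using that barycenter_if_subset_cball[OF \<mu> bounded] uniq by (simp add: circumcenter_def R)
  moreover have "b \<in> conv_bary X" using b \<mu> by (auto simp: conv_bary_def)
  ultimately show ?thesis by blast
qed

end
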